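(* Let $\varphi:\mathcal X\to\mathbb C^N$ be continuous and let $n=\dim_{\mathbb C}\mathcal V_{\mathrm{lin}}$, where $\mathcal V_{\mathrm{lin}}=\mathrm{Span}_{\mathbb C}\{\varphi(x)\varphi(x)^*:x\in\mathcal X\}\subseteq\mathbb C^{N\times N}$. Then there exists a point $z\in\mathcal X$ depending only on $\varphi$ such that the function $f:\mathcal X\to\mathbb R$, $f(x)=\sum_{i=1}^d\cos(2\pi(x_i-z_i))$, satisfies \[|L^{\mathrm{OPT}}_g(U)-L_{\beta f}(U)|\ge\log\Big(\frac{\beta^{d/2}}{2n+1}\Big)-\|g-\beta f\|_\infty\] for every model $g(x)=\varphi(x)^*H\varphi(x)$ with $H$ a Hermitian $N\times N$ matrix and every $\beta>0$, where $U$ denotes the uniform distribution on $\mathcal X$.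
   Context: $\mathcal X=[0,1]^d$. $\mathcal P(\mathcal X)$ is the set of probability measures on $\mathcal X$. For a measurable bounded $h:\mathcal X\to\mathbb R$ and $Q\in\mathcal P(\mathcal X)$, $L_h(Q)=\log\int_{\mathcal X}e^{h(x)}\,dQ(x)$. For $P\in\mathcal P(\mathcal X)$, the moment matrix is $\Sigma_P=\int_{\mathcal X}\varphi(x)\varphi(x)^*\,dP(x)$. With $D_{\mathrm{KL}}(P\|Q)=\int\log(dP/dQ)\,dP$, define $D^{\mathrm{OPT}}_{\mathrm{KL}}(\Sigma_P\|\Sigma_Q)=\inf\{D_{\mathrm{KL}}(\tilde P\|\tilde Q):\tilde P,\tilde Q\in\mathcal P(\mathcal X),\ \Sigma_{\tilde P}=\Sigma_P,\ \Sigma_{\tilde Q}=\Sigma_Q\}$, and $L^{\mathrm{OPT}}_g(Q)=\sup_{P\in\mathcal P(\mathcal X)}\big(\int_{\mathcal X}g\,dP-D^{\mathrm{OPT}}_{\mathrm{KL}}(\Sigma_P\|\Sigma_Q)\big)$. *)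

theory Defs
  imports "HOL-Probability.Probability"
begin

definition cube :: "(real^'d) set" where
  "cube = {x. \<forall>i. 0 \<le> x $ i \<and> x $ i \<le> 1}"

definition prob_measures :: "(real^'d) measure set" where
  "prob_measures = {P. sets P = sets (restrict_space borel cube) \<and> prob_space P}"

definition unif :: "(real^'d) measure" where
  "unif = restrict_space lborel cube"

definition Lh :: "(real^'d \<Rightarrow> real) \<Rightarrow> (real^'d) measure \<Rightarrow> real" where
  "Lh h Q = ln (\<integral>x. exp (h x) \<partial>Q)"

definition moment :: "(real^'d \<Rightarrow> complex^'n) \<Rightarrow> (real^'d) measure \<Rightarrow> complex^'n^'n" where
  "moment \<phi> P = (\<chi> i j. \<integral>x. \<phi> x $ i * cnj (\<phi> x $ j) \<partial>P)"

definition KL :: "'a measure \<Rightarrow> 'a measure \<Rightarrow> ereal" where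
  "KL P Q = (if absolutely_continuous Q P \<and> integrable P (\<lambda>x. ln (enn2real (RN_deriv Q P x)))
             then ereal (\<integral>x. ln (enn2real (RN_deriv Q P x)) \<partial>P) else \<infinity>)"

definition KL_opt :: "(real^'d \<Rightarrow> complex^'n) \<Rightarrow> complex^'n^'n \<Rightarrow> complex^'n^'n \<Rightarrow> ereal" where
  "KL_opt \<phi> SP SQ = (INF PQ \<in> {(P', Q'). P' \<in> prob_measures \<and> Q' \<in> prob_measures \<and>
       moment \<phi> P' = SP \<and> moment \<phi> Q' = SQ}. KL (fst PQ) (snd PQ))"

definition L_opt :: "(real^'d \<Rightarrow> complex^'n) \<Rightarrow> (real^'d \<Rightarrow> real) \<Rightarrow> (real^'d) measure \<Rightarrow> ereal" where
  "L_opt \<phi> g Q = (SUP P \<in> prob_measures.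
       ereal (\<integral>x. g x \<partial>P) - KL_opt \<phi> (moment \<phi> P) (moment \<phi> Q))"

text \<open>V_lin = complex span of the matrices phi(x) phi(x)^*, x in X; matrices in C^{N x N}
  are represented as vectors indexed by pairs of indices, so that vec.dim is the
  complex dimension.\<close>
definition Vlin_gen :: "(real^'d \<Rightarrow> complex^'n) \<Rightarrow> (complex^('n \<times> 'n)) set" where
  "Vlin_gen \<phi> = {(\<chi> ij. \<phi> x $ fst ij * cnj (\<phi> x $ snd ij)) | x. x \<in> cube}"

definition hermitian :: "complex^'n^'n \<Rightarrow> bool" where
  "hermitian H \<longleftrightarrow> (\<forall>i j. H $ i $ j = cnj (H $ j $ i))"

text \<open>The model g(x) = phi(x)^* H phi(x) (real-valued for Hermitian H).\<close>
definition model :: "(real^'d \<Rightarrow> complex^'n) \<Rightarrow> complex^'n^'n \<Rightarrow> real^'d \<Rightarrow> real" where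
  "model \<phi> H x = Re (\<Sum>i\<in>UNIV. \<Sum>j\<in>UNIV. cnj (\<phi> x $ i) * H $ i $ j * \<phi> x $ j)"

end

theory Submission
  imports Defs
begin

(* The moment matrix of the uniform distribution U lies in the convex hull of the matrices
   phi(x) phi(x)^*, a set of real affine dimension at most 2n.  By Caratheodory it is the moment
   matrix of a discrete distribution Q with at most 2n + 1 atoms, one of which, z, has mass at
   least 1/(2n + 1).  The Dirac mass P at z has D_KL(P || Q) = - ln Q{z} <= ln (2n + 1), hence
   L^OPT_g(U) >= g(z) - ln (2n + 1) >= beta d - ||g - beta f||_oo - ln (2n + 1).  On the other
   side, f is maximal at z and cos (2 pi y) <= 1 - 8 y^2 on [-1/2, 1/2], so a Gaussian bound in
   each coordinate gives L_{beta f}(U) <= beta d - (d/2) ln beta. *)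

lemma jordan_inequality:
  fixes x :: real
  assumes "0 \<le> x" "x \<le> pi / 2"
  shows "2 / pi * x \<le> sin x"
proof -
  have "convex_on {0..pi} (\<lambda>x. - sin x)"
    by (rule f''_ge0_imp_convex[where f'="\<lambda>x. - cos x" and f''="\<lambda>x. sin x"])
       (auto intro!: derivative_eq_intros simp: sin_ge_zero)
  moreover have "0 \<le> 2 / pi * x" "2 / pi * x \<le> 1"
    using assms pi_gt_zero by (auto simp: field_simps)
  ultimately have
    "- sin ((1 - 2 / pi * x) * 0 + 2 / pi * x * (pi / 2)) \<le> 2 / pi * x * - sin (pi / 2)"
    using convex_onD[of "{0..pi}" "\<lambda>x. - sin x" "2 / pi * x" 0 "pi / 2"] by simp
  then show ?thesis
    by simp
qed

lemma cos_two_pi_le_quadratic: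
  fixes y :: real
  assumes "\<bar>y\<bar> \<le> 1 / 2"
  shows "cos (2 * pi * y) \<le> 1 - 8 * y\<^sup>2"
proof -
  have "2 / pi * (pi * \<bar>y\<bar>) \<le> sin (pi * \<bar>y\<bar>)"
    using assms by (intro jordan_inequality) auto
  then have "2 * \<bar>y\<bar> \<le> \<bar>sin (pi * y)\<bar>"
    by (cases "y \<ge> 0") (auto simp: sin_ge_zero)
  then have "(2 * y)\<^sup>2 \<le> (sin (pi * y))\<^sup>2"
    by (metis abs_le_square_iff abs_mult abs_numeral)
  moreover have "cos (2 * pi * y) = 1 - 2 * (sin (pi * y))\<^sup>2"
    using cos_double_sin[of "pi * y"] by (simp add: mult.assoc)
  ultimately show ?thesis
    by (simp add: power_mult_distrib)
qed

lemma nn_integral_gaussian: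
  fixes b :: real
  assumes "b > 0"
  shows "(\<integral>\<^sup>+x. ennreal (exp (- b * x\<^sup>2)) \<partial>lborel) = ennreal (sqrt (pi / b))"
proof -
  define \<sigma> where "\<sigma> = 1 / sqrt (2 * b)"
  have "\<sigma> > 0" and variance: "2 * \<sigma>\<^sup>2 = 1 / b"
    using assms by (simp_all add: \<sigma>_def power_divide)
  then have "exp (- b * x\<^sup>2) = sqrt (pi / b) * normal_density 0 \<sigma> x" for x
    using assms by (simp add: normal_density_def variance real_sqrt_divide field_simps)
  then have "(\<integral>\<^sup>+x. ennreal (exp (- b * x\<^sup>2)) \<partial>lborel)
      = ennreal (sqrt (pi / b)) * (\<integral>\<^sup>+x. ennreal (normal_density 0 \<sigma> x) \<partial>lborel)"
    by (simp add: ennreal_mult'' nn_integral_cmult)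
  also have "(\<integral>\<^sup>+x. ennreal (normal_density 0 \<sigma> x) \<partial>lborel) = 1"
    using \<open>\<sigma> > 0\<close> by (subst nn_integral_eq_integral)
      (auto simp: integrable_normal_density integral_normal_density)
  finally show ?thesis
    by simp
qed

lemma nn_integral_lborel_translate:
  fixes c :: "'a::euclidean_space"
  assumes "f \<in> borel_measurable borel"
  shows "(\<integral>\<^sup>+x. f (x + c) \<partial>lborel) = (\<integral>\<^sup>+x. f x \<partial>lborel)"
  using nn_integral_distr[of "(+) c" lborel borel f] assms
  by (simp add: lborel_distr_plus add.commute)

lemma nn_integral_periodic_interval:
  fixes F :: "real \<Rightarrow> ennreal"
  assumes [measurable]: "F \<in> borel_measurable borel"
    and periodic: "\<And>x. F (x + 1) = F x" and "\<bar>a - b\<bar> \<le> 1"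
  shows "(\<integral>\<^sup>+x\<in>{a..<a + 1}. F x \<partial>lborel) = (\<integral>\<^sup>+x\<in>{b..<b + 1}. F x \<partial>lborel)"
proof -
  have shift: "(\<integral>\<^sup>+x\<in>{a..<a + 1}. F x \<partial>lborel) = (\<integral>\<^sup>+x\<in>{b..<b + 1}. F x \<partial>lborel)"
    if "b \<le> a" "a \<le> b + 1" for a b
  proof -
    \<comment> \<open>cut \<open>[a, a + 1)\<close> at \<open>b + 1\<close> and move the right piece back by one period
      onto \<open>[b, a)\<close>\<close>
    have "(\<integral>\<^sup>+x\<in>{b + 1..<a + 1}. F x \<partial>lborel)
        = (\<integral>\<^sup>+x. F (x + 1) * indicator {b + 1..<a + 1} (x + 1) \<partial>lborel)"
      by (rule nn_integral_lborel_translate[symmetric]) measurable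
    also have "\<dots> = (\<integral>\<^sup>+x\<in>{b..<a}. F x \<partial>lborel)"
      by (simp add: periodic indicator_def)
    finally have wrap: "(\<integral>\<^sup>+x\<in>{b + 1..<a + 1}. F x \<partial>lborel) = (\<integral>\<^sup>+x\<in>{b..<a}. F x \<partial>lborel)" .
    have "(\<integral>\<^sup>+x\<in>{a..<a + 1}. F x \<partial>lborel)
        = (\<integral>\<^sup>+x. F x * indicator {a..<b + 1} x + F x * indicator {b + 1..<a + 1} x \<partial>lborel)"
      using that by (intro nn_integral_cong) (auto split: split_indicator)
    also have "\<dots> = (\<integral>\<^sup>+x\<in>{a..<b + 1}. F x \<partial>lborel) + (\<integral>\<^sup>+x\<in>{b..<a}. F x \<partial>lborel)"
      by (simp add: nn_integral_add wrap)
    also have "\<dots> = (\<integral>\<^sup>+x. F x * indicator {a..<b + 1} x + F x * indicator {b..<a} x \<partial>lborel)"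
      by (simp add: nn_integral_add)
    also have "\<dots> = (\<integral>\<^sup>+x\<in>{b..<b + 1}. F x \<partial>lborel)"
      using that by (intro nn_integral_cong) (auto split: split_indicator)
    finally show ?thesis .
  qed
  show ?thesis
    using shift[of a b] shift[of b a] assms(3) by (cases "b \<le> a") auto
qed

lemma nn_integral_exp_cos_le:
  fixes \<beta> c :: real
  assumes "\<beta> > 0" "0 \<le> c" "c \<le> 1"
  shows "(\<integral>\<^sup>+t\<in>{0..1}. ennreal (exp (\<beta> * cos (2 * pi * (t - c)))) \<partial>lborel)
    \<le> ennreal (exp \<beta> / sqrt \<beta>)"
proof -
  define F where "F s = ennreal (exp (\<beta> * cos (2 * pi * s)))" for s
  have [measurable]: "F \<in> borel_measurable borel"
    unfolding F_def by measurable
  have "F (s + 1) = F s" for s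
    using cos_periodic[of "2 * pi * s"] by (simp add: F_def distrib_left)
  then have periodic:
    "(\<integral>\<^sup>+s\<in>{- c..<- c + 1}. F s \<partial>lborel) = (\<integral>\<^sup>+s\<in>{- 1 / 2..<- 1 / 2 + 1}. F s \<partial>lborel)"
    using assms by (intro nn_integral_periodic_interval) auto
  have "(\<integral>\<^sup>+t\<in>{0..1}. ennreal (exp (\<beta> * cos (2 * pi * (t - c)))) \<partial>lborel)
      = (\<integral>\<^sup>+t. F (t - c) * indicator {0..<1} t \<partial>lborel)"
    using AE_lborel_singleton[of 1]
    by (intro nn_integral_cong_AE) (auto simp: F_def elim!: eventually_mono split: split_indicator)
  also have "\<dots> = (\<integral>\<^sup>+s. F (s + c - c) * indicator {0..<1} (s + c) \<partial>lborel)"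
    by (rule nn_integral_lborel_translate[symmetric]) measurable
  also have "\<dots> = (\<integral>\<^sup>+s\<in>{- c..<- c + 1}. F s \<partial>lborel)"
    by (intro nn_integral_cong) (auto split: split_indicator)
  also have "\<dots> \<le> (\<integral>\<^sup>+s. ennreal (exp \<beta>) * ennreal (exp (- (8 * \<beta>) * s\<^sup>2)) \<partial>lborel)"
    unfolding periodic
  proof (intro nn_integral_mono)
    fix s :: real
    have "F s \<le> ennreal (exp \<beta>) * ennreal (exp (- (8 * \<beta>) * s\<^sup>2))" if "\<bar>s\<bar> \<le> 1 / 2"
    proof -
      have "\<beta> * cos (2 * pi * s) \<le> \<beta> * (1 - 8 * s\<^sup>2)"
        using cos_two_pi_le_quadratic[OF that] assms(1) by simp
      then show ?thesis
        by (simp add: F_def ennreal_mult'[symmetric] exp_add[symmetric] algebra_simps)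
    qed
    then show "F s * indicator {- 1 / 2..<- 1 / 2 + 1} s
        \<le> ennreal (exp \<beta>) * ennreal (exp (- (8 * \<beta>) * s\<^sup>2))"
      by (auto split: split_indicator)
  qed
  also have "\<dots> = ennreal (exp \<beta>) * ennreal (sqrt (pi / (8 * \<beta>)))"
    using nn_integral_gaussian[of "8 * \<beta>"] assms(1) by (simp add: nn_integral_cmult)
  also have "\<dots> = ennreal (exp \<beta> * sqrt (pi / 8) / sqrt \<beta>)"
    by (simp add: ennreal_mult'[symmetric] real_sqrt_divide real_sqrt_mult)
  also have "\<dots> \<le> ennreal (exp \<beta> / sqrt \<beta>)"
    using pi_less_4 assms(1) by (intro ennreal_leI divide_right_mono mult_left_le) auto
  finally show ?thesis .
qed

lemma cube_eq_cbox: "(cube :: (real^'d) set) = cbox 0 (vec 1)"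
  by (auto simp: cube_def mem_box_cart)

lemma compact_cube: "compact (cube :: (real^'d) set)"
  unfolding cube_eq_cbox by simp

lemma sets_cube [measurable]: "(cube :: (real^'d) set) \<in> sets borel"
  unfolding cube_eq_cbox by simp

lemma Basis_real_vec: "(Basis :: (real^'d) set) = range (\<lambda>i. axis i 1)"
  by (auto simp: Basis_vec_def)

lemma emeasure_lborel_cube: "emeasure lborel (cube :: (real^'d) set) = 1"
proof -
  have "(\<Prod>b\<in>Basis. (vec 1 - 0) \<bullet> (b :: real^'d)) = 1"
    by (intro prod.neutral) (auto simp: Basis_real_vec inner_axis)
  then show ?thesis
    unfolding cube_eq_cbox by (subst emeasure_lborel_cbox) (auto simp: Basis_real_vec inner_axis)
qed

lemma prob_space_unif: "prob_space (unif :: (real^'d) measure)"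
  unfolding unif_def
  by (rule prob_spaceI)
    (simp add: space_restrict_space emeasure_restrict_space emeasure_lborel_cube)

lemma unif_in_prob_measures: "(unif :: (real^'d) measure) \<in> prob_measures"
  unfolding prob_measures_def unif_def using prob_space_unif[unfolded unif_def]
  by (simp add: sets_restrict_space)

lemma nn_integral_exp_cos_cube_le:
  fixes z :: "real^'d" and \<beta> :: real
  assumes "z \<in> cube" "\<beta> > 0"
  shows "(\<integral>\<^sup>+x\<in>cube. ennreal (exp (\<beta> * (\<Sum>i\<in>UNIV. cos (2 * pi * (x $ i - z $ i))))) \<partial>lborel)
    \<le> ennreal ((exp \<beta> / sqrt \<beta>) ^ CARD('d))"
proof -
  define g where "g b t = ennreal (exp (\<beta> * cos (2 * pi * (t - z \<bullet> b)))) * indicator {0..1} t"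
    for b :: "real^'d" and t
  have "(\<Prod>b\<in>Basis. g b (x \<bullet> b)) = (\<Prod>i\<in>UNIV. g (axis i 1) (x $ i))" for x :: "real^'d"
    unfolding Basis_real_vec by (subst prod.reindex) (auto simp: inj_on_def axis_eq_axis inner_axis)
  also have "\<dots> x
      = ennreal (exp (\<beta> * (\<Sum>i\<in>UNIV. cos (2 * pi * (x $ i - z $ i))))) * indicator cube x" for x
    by (simp add: g_def inner_axis prod.distrib prod_ennreal exp_sum sum_distrib_left
        indicator_def cube_def prod_zero_iff)
  finally have factor:
    "ennreal (exp (\<beta> * (\<Sum>i\<in>UNIV. cos (2 * pi * (x $ i - z $ i))))) * indicator cube x
      = (\<Prod>b\<in>Basis. g b (x \<bullet> b))" for x
    by simp
  have "(\<integral>\<^sup>+x. (\<Prod>b\<in>Basis. g b (x \<bullet> b)) \<partial>lborel) = (\<Prod>b\<in>Basis. (\<integral>\<^sup>+t. g b t \<partial>lborel))"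
    by (rule nn_integral_lborel_prod) (auto simp: g_def)
  also have "\<dots> \<le> (\<Prod>b\<in>(Basis :: (real^'d) set). ennreal (exp \<beta> / sqrt \<beta>))"
  proof (rule prod_mono_ennreal)
    fix b :: "real^'d"
    assume "b \<in> Basis"
    then have "0 \<le> z \<bullet> b" "z \<bullet> b \<le> 1"
      using assms(1) by (auto simp: Basis_real_vec inner_axis cube_def)
    then show "(\<integral>\<^sup>+t. g b t \<partial>lborel) \<le> ennreal (exp \<beta> / sqrt \<beta>)"
      unfolding g_def using assms(2) by (rule nn_integral_exp_cos_le[rotated])
  qed
  also have "\<dots> = ennreal ((exp \<beta> / sqrt \<beta>) ^ CARD('d))"
    using assms(2) by (simp add: ennreal_power)
  finally show ?thesis
    unfolding factor .
qed

lemma sets_prob_measures: "P \<in> prob_measures \<Longrightarrow> sets P = sets (restrict_space borel cube)"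
  by (simp add: prob_measures_def)

lemma space_prob_measures: "P \<in> prob_measures \<Longrightarrow> space P = cube"
  using sets_eq_imp_space_eq[OF sets_prob_measures] by (simp add: space_restrict_space)

lemma measurable_prob_measures_continuous:
  assumes "P \<in> prob_measures" "continuous_on cube h"
  shows "h \<in> borel_measurable P"
  using borel_measurable_continuous_on_restrict[OF assms(2)] sets_prob_measures[OF assms(1)]
  by (simp cong: measurable_cong_sets)

lemma integrable_prob_measures_continuous:
  fixes h :: "real^'d \<Rightarrow> 'b::{banach, second_countable_topology}"
  assumes "P \<in> prob_measures" "continuous_on cube h"
  shows "integrable P h"
proof -
  interpret prob_space P
    using assms(1) by (simp add: prob_measures_def)
  obtain B where "\<forall>x\<in>cube. norm (h x) \<le> B"
    using compact_imp_bounded[OF compact_continuous_image[OF assms(2) compact_cube]]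
    by (auto simp: bounded_iff)
  then show ?thesis
    using measurable_prob_measures_continuous[OF assms] space_prob_measures[OF assms(1)]
    by (intro integrable_const_bound[where B=B]) auto
qed

lemma integral_unif_eq_nn_integral:
  fixes h :: "real^'d \<Rightarrow> real"
  assumes "h \<in> borel_measurable borel" "\<And>x. 0 \<le> h x"
  shows "(\<integral>x. h x \<partial>unif) = enn2real (\<integral>\<^sup>+x\<in>cube. ennreal (h x) \<partial>lborel)"
proof -
  have "(\<integral>x. h x \<partial>unif) = (\<integral>x. indicator cube x *\<^sub>R h x \<partial>lborel)"
    unfolding unif_def by (rule integral_restrict_space) simp
  also have "\<dots> = enn2real (\<integral>\<^sup>+x\<in>cube. ennreal (h x) \<partial>lborel)"
    using assms by (subst integral_eq_nn_integral)
      (auto intro!: arg_cong[where f=enn2real] nn_integral_cong split: split_indicator)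
  finally show ?thesis .
qed

lemma Lh_exp_cos_le:
  fixes z :: "real^'d" and \<beta> :: real
  assumes "z \<in> cube" "\<beta> > 0"
  shows "Lh (\<lambda>x. \<beta> * (\<Sum>i\<in>UNIV. cos (2 * pi * (x $ i - z $ i)))) unif
    \<le> \<beta> * CARD('d) - CARD('d) / 2 * ln \<beta>"
proof -
  define h where "h x = exp (\<beta> * (\<Sum>i\<in>UNIV. cos (2 * pi * (x $ i - z $ i))))" for x :: "real^'d"
  interpret prob_space "unif :: (real^'d) measure"
    by (rule prob_space_unif)
  have "continuous_on cube h"
    unfolding h_def by (intro continuous_intros)
  then have "integrable unif h"
    by (intro integrable_prob_measures_continuous unif_in_prob_measures)
  have "exp (- \<beta> * CARD('d)) \<le> h x" for x
  proof -
    have "real CARD('d) * (- 1) \<le> (\<Sum>i\<in>UNIV. cos (2 * pi * (x $ i - z $ i)))"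
      by (rule sum_bounded_below) simp
    then have "\<beta> * - real CARD('d) \<le> \<beta> * (\<Sum>i\<in>UNIV. cos (2 * pi * (x $ i - z $ i)))"
      using assms(2) by (intro mult_left_mono) auto
    then show ?thesis
      by (simp add: h_def)
  qed
  then have "exp (- \<beta> * CARD('d)) \<le> (\<integral>x. h x \<partial>unif)"
    using \<open>integrable unif h\<close> by (intro integral_ge_const) auto
  then have pos: "0 < (\<integral>x. h x \<partial>unif)"
    using exp_gt_zero less_le_trans by blast
  have "(\<integral>x. h x \<partial>unif) = enn2real (\<integral>\<^sup>+x\<in>cube. ennreal (h x) \<partial>lborel)"
    unfolding h_def by (rule integral_unif_eq_nn_integral) auto
  also have "\<dots> \<le> (exp \<beta> / sqrt \<beta>) ^ CARD('d)"
    using nn_integral_exp_cos_cube_le[OF assms] assms(2) unfolding h_def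
    by (intro enn2real_leI) auto
  finally have "(\<integral>x. h x \<partial>unif) \<le> (exp \<beta> / sqrt \<beta>) ^ CARD('d)" .
  have "Lh (\<lambda>x. \<beta> * (\<Sum>i\<in>UNIV. cos (2 * pi * (x $ i - z $ i)))) unif = ln (\<integral>x. h x \<partial>unif)"
    by (simp add: Lh_def h_def)
  also have "\<dots> \<le> ln ((exp \<beta> / sqrt \<beta>) ^ CARD('d))"
    using pos \<open>(\<integral>x. h x \<partial>unif) \<le> _\<close> by simp
  also have "\<dots> = CARD('d) * (\<beta> - ln \<beta> / 2)"
    using assms(2) by (simp add: ln_realpow ln_div ln_sqrt)
  finally show ?thesis
    by (simp add: algebra_simps)
qed

lemma (in prob_space) integral_in_closed_convex:
  fixes f :: "'a \<Rightarrow> 'b::euclidean_space"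
  assumes "integrable M f" "closed C" "convex C" "\<And>x. x \<in> space M \<Longrightarrow> f x \<in> C"
  shows "(\<integral>x. f x \<partial>M) \<in> C"
proof (rule ccontr)
  assume "(\<integral>x. f x \<partial>M) \<notin> C"
  then obtain a b where separating: "a \<bullet> (\<integral>x. f x \<partial>M) < b" "\<forall>y\<in>C. b < a \<bullet> y"
    using separating_hyperplane_closed_point assms(2,3) by blast
  have "b \<le> (\<integral>x. a \<bullet> f x \<partial>M)"
    using assms(1,4) separating(2) by (intro integral_ge_const) (auto intro!: AE_I2 less_imp_le)
  with separating(1) show False
    using assms(1) by simp
qed

definition outer :: "(real^'d \<Rightarrow> complex^'n) \<Rightarrow> real^'d \<Rightarrow> complex^('n \<times> 'n)" where
  "outer \<phi> x = (\<chi> ij. \<phi> x $ fst ij * cnj (\<phi> x $ snd ij))"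

lemma outer_nth [simp]: "outer \<phi> x $ (i, j) = \<phi> x $ i * cnj (\<phi> x $ j)"
  by (simp add: outer_def)

lemma Vlin_gen_eq_image_outer: "Vlin_gen \<phi> = outer \<phi> ` cube"
  by (auto simp: Vlin_gen_def outer_def)

lemma continuous_on_outer: "continuous_on cube \<phi> \<Longrightarrow> continuous_on cube (outer \<phi>)"
  unfolding outer_def by (intro continuous_intros) auto

lemma moment_eq_integral_outer:
  assumes "integrable P (outer \<phi>)"
  shows "moment \<phi> P = (\<chi> i j. (\<integral>x. outer \<phi> x \<partial>P) $ (i, j))"
proof -
  have "(\<integral>x. \<phi> x $ i * cnj (\<phi> x $ j) \<partial>P) = (\<integral>x. outer \<phi> x \<partial>P) $ (i, j)" for i j
    using integral_bounded_linear[OF bounded_linear_vec_nth assms, of "(i, j)"] by simp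
  then show ?thesis
    by (simp add: moment_def vec_eq_iff)
qed

lemma moment_eq_if_integral_outer_eq:
  assumes "continuous_on cube \<phi>" "P \<in> prob_measures" "Q \<in> prob_measures"
    "(\<integral>x. outer \<phi> x \<partial>P) = (\<integral>x. outer \<phi> x \<partial>Q)"
  shows "moment \<phi> P = moment \<phi> Q"
proof -
  have "integrable P (outer \<phi>)" "integrable Q (outer \<phi>)"
    using assms(1-3) by (auto intro!: integrable_prob_measures_continuous continuous_on_outer)
  then show ?thesis
    using assms(4) by (simp add: moment_eq_integral_outer)
qed

lemma dim_le_twice_vec_dim:
  fixes V :: "(complex^'m) set"
  shows "dim V \<le> 2 * vec.dim V"
proof -
  obtain B where B: "B \<subseteq> V" "vec.independent B" "V \<subseteq> vec.span B" "card B = vec.dim V"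
    by (rule vec.basis_exists)
  \<comment> \<open>a complex basis together with its multiples by \<open>\<i>\<close> spans \<open>V\<close> over the reals\<close>
  have "finite B"
    using B(2) by (rule vec.finiteI_independent)
  define W where "W = B \<union> (\<lambda>b. \<i> *s b) ` B"
  have "vec.span B \<subseteq> span W"
  proof
    fix y
    assume "y \<in> vec.span B"
    then obtain u where y: "y = (\<Sum>b\<in>B. u b *s b)"
      using vec.span_finite[OF \<open>finite B\<close>] by blast
    have "u b *s b = Re (u b) *\<^sub>R b + Im (u b) *\<^sub>R (\<i> *s b)" for b
      by (simp add: vec_eq_iff complex_eq_iff)
    moreover have "Re (u b) *\<^sub>R b + Im (u b) *\<^sub>R (\<i> *s b) \<in> span W" if "b \<in> B" for b
      using that by (intro span_add span_scale span_base) (auto simp: W_def)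
    ultimately show "y \<in> span W"
      unfolding y by (intro span_sum) auto
  qed
  then have "dim V \<le> card W"
    using B(3) \<open>finite B\<close> by (intro dim_le_card) (auto simp: W_def)
  also have "\<dots> \<le> card B + card ((\<lambda>b. \<i> *s b) ` B)"
    unfolding W_def by (rule card_Un_le)
  also have "card ((\<lambda>b. \<i> *s b) ` B) \<le> card B"
    using \<open>finite B\<close> by (rule card_image_le)
  finally show ?thesis
    using B(4) by simp
qed

lemma aff_dim_le_twice_vec_dim:
  fixes V :: "(complex^'m) set"
  shows "aff_dim V \<le> 2 * int (vec.dim V)"
proof -
  have "aff_dim V \<le> aff_dim (span V)"
    by (rule aff_dim_subset[OF span_superset])
  also have "\<dots> = int (dim V)"
    by (simp add: aff_dim_subspace)
  also have "\<dots> \<le> 2 * int (vec.dim V)"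
    using dim_le_twice_vec_dim[of V] by linarith
  finally show ?thesis .
qed

lemma convex_hull_heavy_pmf:
  fixes S :: "'a::euclidean_space set"
  assumes "x \<in> convex hull S"
  obtains q :: "'a pmf" and y where "set_pmf q \<subseteq> S"
    "measure_pmf.expectation q (\<lambda>v. v) = x" "1 \<le> pmf q y * (aff_dim S + 1)"
proof -
  obtain T where T: "finite T" "T \<subseteq> S" "card T \<le> aff_dim S + 1" "x \<in> convex hull T"
    using assms caratheodory_aff_dim[of S] by blast
  obtain u where u: "\<forall>v\<in>T. 0 \<le> u v" "sum u T = 1" "(\<Sum>v\<in>T. u v *\<^sub>R v) = x"
    using T(4) by (auto simp: convex_hull_finite[OF T(1)])
  \<comment> \<open>at most \<open>aff_dim S + 1\<close> weights sum to 1, so the largest one is heavy\<close>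
  have "T \<noteq> {}"
    using u(2) by auto
  then have "Max (u ` T) \<in> u ` T"
    using T(1) by simp
  then obtain y where "y \<in> T" "u y = Max (u ` T)"
    by auto
  then have "1 \<le> card T * u y"
    using sum_bounded_above[of T u "u y"] T(1) u(2) by simp
  also have "\<dots> \<le> (aff_dim S + 1) * u y"
    using T(3) u(1) \<open>y \<in> T\<close> by (intro mult_right_mono) auto
  finally have heavy: "1 \<le> u y * (aff_dim S + 1)"
    by (simp add: mult.commute)
  define q where "q = embed_pmf (\<lambda>v. if v \<in> T then u v else 0)"
  have "(\<integral>\<^sup>+v. ennreal (if v \<in> T then u v else 0) \<partial>count_space UNIV) = 1"
    using T(1) u(1,2) by (subst nn_integral_count_space'[of T]) (auto simp: sum_ennreal)
  then have pmf_q: "pmf q v = (if v \<in> T then u v else 0)" for v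
    unfolding q_def using u(1) by (intro pmf_embed_pmf) auto
  then have "set_pmf q \<subseteq> T"
    by (auto simp: set_pmf_iff split: if_splits)
  moreover have "measure_pmf.expectation q (\<lambda>v. v) = x"
    using T(1) \<open>set_pmf q \<subseteq> T\<close> u(3) by (subst integral_measure_pmf[of T]) (auto simp: pmf_q)
  ultimately show ?thesis
    using that[of q y] T(2) heavy pmf_q \<open>y \<in> T\<close> by auto
qed

lemma integral_outer_unif_in_convex_hull:
  assumes "continuous_on cube \<phi>"
  shows "(\<integral>x. outer \<phi> x \<partial>unif) \<in> convex hull (Vlin_gen \<phi>)"
proof (rule prob_space.integral_in_closed_convex[OF prob_space_unif])
  show "integrable unif (outer \<phi>)"
    using assms unif_in_prob_measures
    by (intro integrable_prob_measures_continuous continuous_on_outer)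
  show "closed (convex hull (Vlin_gen \<phi>))"
    unfolding Vlin_gen_eq_image_outer using assms continuous_on_outer compact_cube
    by (intro compact_imp_closed compact_convex_hull compact_continuous_image)
  show "outer \<phi> x \<in> convex hull (Vlin_gen \<phi>)" if "x \<in> space unif" for x
    using that space_prob_measures[OF unif_in_prob_measures]
    by (auto simp: Vlin_gen_eq_image_outer intro: hull_inc)
qed simp

lemma moment_matching_pmf:
  fixes \<phi> :: "real^'d \<Rightarrow> complex^'n"
  assumes "continuous_on cube \<phi>"
  obtains p :: "(real^'d) pmf" and z where "set_pmf p \<subseteq> cube" "z \<in> cube"
    "measure_pmf.expectation p (outer \<phi>) = (\<integral>x. outer \<phi> x \<partial>unif)"
    "1 \<le> pmf p z * (2 * real (vec.dim (Vlin_gen \<phi>)) + 1)"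
proof -
  obtain q y where q: "set_pmf q \<subseteq> Vlin_gen \<phi>"
      "measure_pmf.expectation q (\<lambda>v. v) = (\<integral>x. outer \<phi> x \<partial>unif)"
    and heavy: "1 \<le> pmf q y * (aff_dim (Vlin_gen \<phi>) + 1)"
    using integral_outer_unif_in_convex_hull[OF assms] by (rule convex_hull_heavy_pmf)
  \<comment> \<open>pull the measure back to the cube along a right inverse of \<open>outer \<phi>\<close>\<close>
  define t where "t = inv_into cube (outer \<phi>)"
  have t: "t v \<in> cube" "outer \<phi> (t v) = v" if "v \<in> set_pmf q" for v
    using that q(1) unfolding t_def Vlin_gen_eq_image_outer
    by (auto intro: inv_into_into f_inv_into_f)
  have "y \<in> set_pmf q"
    using heavy by (auto simp: set_pmf_iff)
  show ?thesis
  proof (rule that[of "map_pmf t q" "t y"])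
    show "set_pmf (map_pmf t q) \<subseteq> cube" "t y \<in> cube"
      using t(1) \<open>y \<in> set_pmf q\<close> by auto
    have "measure_pmf.expectation (map_pmf t q) (outer \<phi>) = measure_pmf.expectation q (\<lambda>v. v)"
      using t(2) by (auto simp: AE_measure_pmf_iff intro!: integral_cong_AE)
    then show "measure_pmf.expectation (map_pmf t q) (outer \<phi>) = (\<integral>x. outer \<phi> x \<partial>unif)"
      using q(2) by simp
    have "pmf (map_pmf t q) (t y) = pmf q y"
      using t(2) \<open>y \<in> set_pmf q\<close> by (intro pmf_map_inj inj_on_inverseI[where g="outer \<phi>"])
    moreover have "real_of_int (aff_dim (Vlin_gen \<phi>) + 1) \<le> 2 * real (vec.dim (Vlin_gen \<phi>)) + 1"
      using aff_dim_le_twice_vec_dim[of "Vlin_gen \<phi>"] by linarith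
    ultimately show "1 \<le> pmf (map_pmf t q) (t y) * (2 * real (vec.dim (Vlin_gen \<phi>)) + 1)"
      using heavy mult_left_mono[OF _ pmf_nonneg[of q y]] by (metis order_trans)
  qed
qed

lemma KL_return:
  assumes "prob_space Q" "{z} \<in> sets Q" "measure Q {z} > 0"
  shows "KL (return Q z) Q = ereal (- ln (measure Q {z}))"
proof -
  interpret prob_space Q
    by (rule assms(1))
  define w where "w = measure Q {z}"
  \<comment> \<open>the density of the Dirac measure at \<open>z\<close> with respect to \<open>Q\<close>\<close>
  define f where "f x = ennreal (1 / w) * indicator {z} x" for x
  have "z \<in> space Q"
    using assms(2) sets.sets_into_space by blast
  have f_measurable: "f \<in> borel_measurable Q"
    unfolding f_def using assms(2) by measurable
  have density: "density Q f = return Q z"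
  proof (rule measure_eqI)
    fix A
    assume "A \<in> sets (density Q f)"
    then have A: "A \<in> sets Q"
      by simp
    have "emeasure (density Q f) A = (\<integral>\<^sup>+x. ennreal (1 / w) * indicator ({z} \<inter> A) x \<partial>Q)"
      using A f_measurable
      by (subst emeasure_density) (auto simp: f_def intro!: nn_integral_cong split: split_indicator)
    also have "\<dots> = indicator A z"
      using A assms(2,3)
      by (simp add: nn_integral_cmult_indicator emeasure_eq_measure w_def ennreal_mult''[symmetric]
          split: split_indicator)
    finally show "emeasure (density Q f) A = emeasure (return Q z) A"
      using A by simp
  qed simp
  have "AE x in Q. f x = RN_deriv Q (return Q z) x"
    by (rule RN_deriv_unique[OF f_measurable density])
  then have "f z = RN_deriv Q (return Q z) z"
    using AE_measure_singleton[of Q z "\<lambda>x. f x = RN_deriv Q (return Q z) x"] assms(3) by simp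
  then have RN_z: "RN_deriv Q (return Q z) z = ennreal (1 / w)"
    by (simp add: f_def)
  define l where "l x = ln (enn2real (RN_deriv Q (return Q z) x))" for x
  have "l \<in> borel_measurable (return Q z)"
    unfolding l_def by (simp cong: measurable_cong_sets)
  then have "integrable (return Q z) l" "(\<integral>x. l x \<partial>return Q z) = - ln w"
    using \<open>z \<in> space Q\<close> assms(3) RN_z
    by (auto intro!: integrableI_bounded simp: nn_integral_return integral_return l_def w_def ln_div
        cong: measurable_cong_sets)
  moreover have "absolutely_continuous Q (return Q z)"
    using absolutely_continuousI_density[OF f_measurable] by (simp add: density)
  ultimately show ?thesis
    unfolding KL_def l_def[abs_def] w_def by simp
qed

text \<open>Points outside the cube are sent to \<open>0\<close> only to make the map total; for
  \<open>set_pmf p \<subseteq> cube\<close> they carry no mass.\<close>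

definition cube_measure_of_pmf :: "(real^'d) pmf \<Rightarrow> (real^'d) measure" where
  "cube_measure_of_pmf p =
    distr (measure_pmf p) (restrict_space borel cube) (\<lambda>x. if x \<in> cube then x else 0)"

lemma cube_measure_of_pmf_in_prob_measures: "cube_measure_of_pmf p \<in> prob_measures"
  unfolding prob_measures_def cube_measure_of_pmf_def
  by (auto intro!: measure_pmf.prob_space_distr simp: space_restrict_space cube_def)

lemma integral_cube_measure_of_pmf:
  fixes g :: "real^'d \<Rightarrow> 'b::{banach, second_countable_topology}"
  assumes "set_pmf p \<subseteq> cube" "g \<in> borel_measurable (restrict_space borel cube)"
  shows "(\<integral>x. g x \<partial>cube_measure_of_pmf p) = measure_pmf.expectation p g"
  unfolding cube_measure_of_pmf_def using assms
  by (subst integral_distr) (auto simp: space_restrict_space cube_def AE_measure_pmf_iff subset_iff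
      intro!: integral_cong_AE)

lemma measure_cube_measure_of_pmf_singleton:
  assumes "set_pmf p \<subseteq> cube" "z \<in> cube"
  shows "measure (cube_measure_of_pmf p) {z} = pmf p z"
proof -
  have "{z} \<in> sets (restrict_space borel cube)"
    using assms(2) by (simp add: sets_restrict_space_iff)
  have "measure (cube_measure_of_pmf p) {z} = (\<integral>x. indicator {z} x \<partial>cube_measure_of_pmf p)"
    using assms(2) by (simp add: space_prob_measures[OF cube_measure_of_pmf_in_prob_measures])
  also have "\<dots> = pmf p z"
    using assms(1) \<open>{z} \<in> sets _\<close>
    by (subst integral_cube_measure_of_pmf) (auto simp: measure_pmf_single)
  finally show ?thesis .
qed

lemma return_unif_in_prob_measures: "z \<in> cube \<Longrightarrow> return unif z \<in> prob_measures"
  using unif_in_prob_measures space_prob_measures[OF unif_in_prob_measures]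
  by (auto simp: prob_measures_def intro: prob_space_return)

lemma KL_opt_return_le:
  assumes "continuous_on cube \<phi>" "set_pmf p \<subseteq> cube" "z \<in> cube" "pmf p z > 0"
    "measure_pmf.expectation p (outer \<phi>) = (\<integral>x. outer \<phi> x \<partial>unif)"
  shows "KL_opt \<phi> (moment \<phi> (return unif z)) (moment \<phi> unif) \<le> ereal (- ln (pmf p z))"
proof -
  define Q where "Q = cube_measure_of_pmf p"
  have Q: "Q \<in> prob_measures"
    unfolding Q_def by (rule cube_measure_of_pmf_in_prob_measures)
  have sets_Q: "sets Q = sets unif"
    by (simp only: sets_prob_measures[OF Q] sets_prob_measures[OF unif_in_prob_measures])
  have "moment \<phi> Q = moment \<phi> unif"
    using assms(1) Q unif_in_prob_measures
  proof (rule moment_eq_if_integral_outer_eq)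
    show "(\<integral>x. outer \<phi> x \<partial>Q) = (\<integral>x. outer \<phi> x \<partial>unif)"
      unfolding Q_def using assms(2,5) continuous_on_outer[OF assms(1)]
      by (simp add: integral_cube_measure_of_pmf borel_measurable_continuous_on_restrict)
  qed
  moreover have "KL (return unif z) Q = ereal (- ln (pmf p z))"
  proof -
    have "{z} \<in> sets Q"
      using sets_Q assms(3) by (simp add: unif_def sets_restrict_space_iff)
    moreover have "measure Q {z} = pmf p z"
      unfolding Q_def using assms(2,3) by (rule measure_cube_measure_of_pmf_singleton)
    ultimately show ?thesis
      using KL_return[of Q z] Q assms(4) return_cong[OF sets_Q] by (simp add: prob_measures_def)
  qed
  ultimately show ?thesis
    unfolding KL_opt_def using Q return_unif_in_prob_measures[OF assms(3)]
    by (intro INF_lower2[of "(return unif z, Q)"]) auto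
qed

lemma L_opt_ge_point:
  assumes "z \<in> cube" "g \<in> borel_measurable unif"
  shows "ereal (g z) - KL_opt \<phi> (moment \<phi> (return unif z)) (moment \<phi> unif) \<le> L_opt \<phi> g unif"
proof -
  have "(\<integral>x. g x \<partial>return unif z) = g z"
    using assms space_prob_measures[OF unif_in_prob_measures] by (intro integral_return) auto
  then show ?thesis
    unfolding L_opt_def using return_unif_in_prob_measures[OF assms(1)] by (intro SUP_upper2) auto
qed

lemma L_opt_ge_at_heavy_point:
  fixes \<phi> :: "real^'d \<Rightarrow> complex^'n"
  assumes "continuous_on cube \<phi>"
  obtains z where "z \<in> cube" "\<And>g. continuous_on cube g \<Longrightarrow>
    ereal (g z - ln (2 * real (vec.dim (Vlin_gen \<phi>)) + 1)) \<le> L_opt \<phi> g unif"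
proof -
  define m where "m = 2 * real (vec.dim (Vlin_gen \<phi>)) + 1"
  obtain p :: "(real^'d) pmf" and z where p: "set_pmf p \<subseteq> cube" "z \<in> cube"
      "measure_pmf.expectation p (outer \<phi>) = (\<integral>x. outer \<phi> x \<partial>unif)"
    and heavy: "1 \<le> pmf p z * m"
    unfolding m_def using moment_matching_pmf[OF assms] by blast
  have "pmf p z > 0"
    using heavy pmf_nonneg[of p z] by (cases "pmf p z = 0") auto
  moreover have "1 / pmf p z \<le> m"
    using heavy \<open>pmf p z > 0\<close> by (simp add: field_simps mult.commute)
  ultimately have "- ln (pmf p z) \<le> ln m"
    using ln_le_cancel_iff[of "1 / pmf p z" m] by (simp add: ln_div m_def)
  then have KL_z: "KL_opt \<phi> (moment \<phi> (return unif z)) (moment \<phi> unif) \<le> ereal (ln m)"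
    using KL_opt_return_le[OF assms p(1,2) \<open>pmf p z > 0\<close> p(3)] by (auto elim: order_trans)
  have "ereal (g z - ln m) \<le> L_opt \<phi> g unif" if "continuous_on cube g" for g
  proof -
    have "ereal (g z - ln m) = ereal (g z) - ereal (ln m)"
      by simp
    also have "\<dots> \<le> ereal (g z) - KL_opt \<phi> (moment \<phi> (return unif z)) (moment \<phi> unif)"
      by (rule ereal_minus_mono[OF order_refl KL_z])
    also have "\<dots> \<le> L_opt \<phi> g unif"
      using p(2) measurable_prob_measures_continuous[OF unif_in_prob_measures that]
      by (rule L_opt_ge_point)
    finally show ?thesis .
  qed
  with p(2) that show ?thesis
    unfolding m_def by blast
qed

lemma le_SUP_cube:
  fixes h :: "real^'d \<Rightarrow> real"
  assumes "continuous_on cube h" "z \<in> cube"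
  shows "h z \<le> (SUP x\<in>cube. h x)"
  using compact_continuous_image[OF assms(1) compact_cube]
  by (intro cSUP_upper[OF assms(2)] bounded_imp_bdd_above compact_imp_bounded)

lemma ereal_le_abs_diff: "ereal c \<le> a \<Longrightarrow> ereal (c - b) \<le> \<bar>a - ereal b\<bar>"
  by (cases a) auto

lemma abs_diff_Lh_cos_ge:
  fixes g :: "real^'d \<Rightarrow> real" and L :: ereal
  assumes "continuous_on cube g" "z \<in> cube" "\<beta> > 0" "c > 0" "ereal (g z - ln c) \<le> L"
  shows "ereal (ln (\<beta> powr (CARD('d) / 2) / c)
      - (SUP x\<in>cube. \<bar>g x - \<beta> * (\<Sum>i\<in>UNIV. cos (2 * pi * (x $ i - z $ i)))\<bar>))
    \<le> \<bar>L - ereal (Lh (\<lambda>x. \<beta> * (\<Sum>i\<in>UNIV. cos (2 * pi * (x $ i - z $ i)))) unif)\<bar>"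
proof -
  define f where "f x = (\<Sum>i\<in>UNIV. cos (2 * pi * (x $ i - z $ i)))" for x :: "real^'d"
  define S where "S = (SUP x\<in>cube. \<bar>g x - \<beta> * f x\<bar>)"
  have "\<bar>g z - \<beta> * f z\<bar> \<le> S"
    unfolding S_def f_def using assms(1,2) by (intro le_SUP_cube continuous_intros)
  then have "\<beta> * CARD('d) - S \<le> g z"
    by (simp add: f_def)
  moreover have "Lh (\<lambda>x. \<beta> * f x) unif \<le> \<beta> * CARD('d) - CARD('d) / 2 * ln \<beta>"
    unfolding f_def using Lh_exp_cos_le[OF assms(2,3)] .
  moreover have "ln (\<beta> powr (CARD('d) / 2) / c) = CARD('d) / 2 * ln \<beta> - ln c"
    using assms(3,4) by (simp add: ln_div ln_powr)
  ultimately have "ln (\<beta> powr (CARD('d) / 2) / c) - S \<le> (g z - ln c) - Lh (\<lambda>x. \<beta> * f x) unif"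
    by linarith
  then have "ereal (ln (\<beta> powr (CARD('d) / 2) / c) - S)
      \<le> ereal ((g z - ln c) - Lh (\<lambda>x. \<beta> * f x) unif)"
    by simp
  also have "\<dots> \<le> \<bar>L - ereal (Lh (\<lambda>x. \<beta> * f x) unif)\<bar>"
    by (rule ereal_le_abs_diff[OF assms(5)])
  finally show ?thesis
    unfolding S_def f_def .
qed

theorem theorem23:
  fixes \<phi> :: "real^'d \<Rightarrow> complex^'n"
  assumes "continuous_on cube \<phi>"
  shows "\<exists>z\<in>(cube :: (real^'d) set). \<forall>H \<beta>. hermitian H \<longrightarrow> \<beta> > 0 \<longrightarrow>
    (let f = (\<lambda>x. \<Sum>i\<in>UNIV. cos (2 * pi * (x $ i - z $ i)));
         g = model \<phi> H;
         n = vec.dim (Vlin_gen \<phi>)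
     in \<bar>L_opt \<phi> g unif - ereal (Lh (\<lambda>x. \<beta> * f x) unif)\<bar>
        \<ge> ereal (ln (\<beta> powr (real CARD('d) / 2) / (2 * real n + 1))
                 - (SUP x\<in>cube. \<bar>g x - \<beta> * f x\<bar>)))"
proof -
  obtain z where z: "z \<in> cube" and L_opt_z: "\<And>g. continuous_on cube g \<Longrightarrow>
      ereal (g z - ln (2 * real (vec.dim (Vlin_gen \<phi>)) + 1)) \<le> L_opt \<phi> g unif"
    using L_opt_ge_at_heavy_point[OF assms] by blast
  \<comment> \<open>the bound holds for every matrix \<open>H\<close>: only continuity of the model is used\<close>
  have "continuous_on cube (model \<phi> H)" for H
    unfolding model_def[abs_def] using assms by (intro continuous_intros) auto
  then show ?thesis
    unfolding Let_def using z L_opt_z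
    by (intro bexI[OF _ z] allI impI abs_diff_Lh_cos_ge) auto
qed

end
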